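(* There are absolute constants $\kappa_1,\dots,\kappa_5>0$ such that the following holds. For every $n\in\mathbb{N}$, every $\delta\in(0,1)$ and every $\varepsilon$ with $\frac{\kappa_2\log(1/\delta)}{n}\le\varepsilon\le 1$, there exists $\lambda=\lambda(n,\varepsilon,\delta)$ such that the bit-sum protocol $P_{n,\lambda}$ is $(\varepsilon,\delta)$-differentially private in the shuffled model and \[ \lambda\le\begin{cases}\dfrac{\kappa_4\log(1/\delta)}{\varepsilon^2} & \text{if } \varepsilon\ge\sqrt{\dfrac{\kappa_3\log(1/\delta)}{n}},\\[2mm] n-\dfrac{\kappa_5\,\varepsilon\, n^{3/2}}{\sqrt{\log(1/\delta)}} & \text{otherwise.}\end{cases} \]
   Context: An algorithm $M$ on datasets $X=(x_1,\dots,x_n)\in\mathcal{X}^n$ is $(\varepsilon,\delta)$-differentially private if for all neighboring datasets $X\sim X'$ (differing in at most one user's entry) and every set $T$ of outputs, $\Pr[M(X)\in T]\le e^{\varepsilon}\Pr[M(X')\in T]+\delta$. In the shuffled model, each of $n$ users applies a randomized encoder $R$ to its datum and sends the resulting message(s) to a shuffler $S$, which outputs all messages in a uniformly random order; an analyzer $A$ then processes the shuffled messages. A protocol $(R,S,A)$ is $(\varepsilon,\delta)$-differentially private in the shuffled model if the map $(x_1,\dots,x_n)\mapsto S(R(x_1),\dots,R(x_n))$ is $(\varepsilon,\delta)$-differentially private. The bit-sum protocol $P_{n,\lambda}=(R_{n,\lambda},S,A_{n,\lambda})$, for $n$ users with $x_i\in\{0,1\}$ and parameter $\lambda\in(0,n)$: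 each user independently draws $b\sim\mathrm{Ber}(\lambda/n)$ and sends the single bit $y=x_i$ if $b=0$ and $y\sim\mathrm{Ber}(1/2)$ (fresh uniform bit) if $b=1$; the analyzer outputs $\frac{n}{n-\lambda}\left(\sum_{i=1}^n y_i-\frac{\lambda}{2}\right)$. Here $\log$ is the natural logarithm. *)

theory Defs
  imports "HOL-Probability.Probability" "HOL-Combinatorics.Permutations"
begin

definition neighboring :: "'a list \<Rightarrow> 'a list \<Rightarrow> bool" where
  "neighboring X X' \<longleftrightarrow> length X = length X' \<and>
     card {i. i < length X \<and> X ! i \<noteq> X' ! i} \<le> 1"

definition diff_private :: "nat \<Rightarrow> ('a list \<Rightarrow> 'b pmf) \<Rightarrow> real \<Rightarrow> real \<Rightarrow> bool" where
  "diff_private n M eps del \<longleftrightarrow>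
     (\<forall>X X'. length X = n \<longrightarrow> neighboring X X' \<longrightarrow>
        (\<forall>T. measure_pmf.prob (M X) T \<le> exp eps * measure_pmf.prob (M X') T + del))"

definition bitsum_encoder :: "nat \<Rightarrow> real \<Rightarrow> bool \<Rightarrow> bool pmf" where
  "bitsum_encoder n lam x =
     bernoulli_pmf (lam / real n) \<bind> (\<lambda>b. if b then bernoulli_pmf (1/2) else return_pmf x)"

fun encode_all :: "('a \<Rightarrow> 'b pmf) \<Rightarrow> 'a list \<Rightarrow> 'b list pmf" where
  "encode_all R [] = return_pmf []"
| "encode_all R (x # xs) =
     R x \<bind> (\<lambda>y. encode_all R xs \<bind> (\<lambda>ys. return_pmf (y # ys)))"

definition shuffler :: "'b list \<Rightarrow> 'b list pmf" where
  "shuffler ys = pmf_of_set {\<sigma>. \<sigma> permutes {..<length ys}} \<bind>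
                   (\<lambda>\<sigma>. return_pmf (permute_list \<sigma> ys))"

definition shuffled_view :: "('a \<Rightarrow> 'b pmf) \<Rightarrow> 'a list \<Rightarrow> 'b list pmf" where
  "shuffled_view R X = encode_all R X \<bind> shuffler"

text \<open>Analyzer A_{n,lambda} (not needed for privacy, recorded for completeness).\<close>
definition bitsum_analyzer :: "nat \<Rightarrow> real \<Rightarrow> bool list \<Rightarrow> real" where
  "bitsum_analyzer n lam ys =
     real n / (real n - lam) * (real (length (filter id ys)) - lam / 2)"

definition bitsum_shuffled_dp :: "nat \<Rightarrow> real \<Rightarrow> real \<Rightarrow> real \<Rightarrow> bool" where
  "bitsum_shuffled_dp n lam eps del \<longleftrightarrow>
     diff_private n (shuffled_view (bitsum_encoder n lam)) eps del"

end

(* The shuffled view is a post-processing of the number of ones among the reports, so it suffices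
   to bound the hockey-stick divergence between the laws of that number on neighbouring datasets.
   Conditioned on which of the other n - 1 users send a fair coin, their number m being distributed
   as Bin(n - 1, \<lambda>/n), the count is a constant plus Bin(m, 1/2) plus the report of the user in
   which the datasets differ: that report is hidden in a blanket of m coins. Inside a window of width
   O(sqrt (m ln (1/\<delta>))) around the mean of the blanket the likelihood ratio of the two possible
   counts is at most e^\<epsilon>, Hoeffding's inequality bounds the mass outside it, and a Chernoff bound
   makes m small only with probability \<delta>/2. When \<delta> > e^(-1/4), total variation alone suffices. *)

theory Submission
  imports Defs
begin

section \<open>Hockey-stick divergence\<close>

lemma prob_bind_pmf_eq_sum:
  assumes "finite S" "set_pmf P \<subseteq> S"
  shows "measure_pmf.prob (bind_pmf P g) T = (\<Sum>x\<in>S. pmf P x * measure_pmf.prob (g x) T)"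
proof -
  have fin: "finite (set_pmf P)" using assms by (rule finite_subset[rotated])
  have "ennreal (measure_pmf.prob (bind_pmf P g) T) = (\<integral>\<^sup>+x. emeasure (measure_pmf (g x)) T \<partial>measure_pmf P)"
    by (simp add: measure_pmf.emeasure_eq_measure[symmetric])
  also have "\<dots> = (\<Sum>x\<in>set_pmf P. ennreal (pmf P x * measure_pmf.prob (g x) T))"
    using fin by (subst nn_integral_measure_pmf_finite)
      (auto simp: measure_pmf.emeasure_eq_measure ennreal_mult' mult.commute)
  also have "\<dots> = ennreal (\<Sum>x\<in>S. pmf P x * measure_pmf.prob (g x) T)"
    using assms by (subst sum_ennreal) (auto intro!: arg_cong[where f = ennreal] sum.mono_neutral_left
        simp: set_pmf_iff)
  finally show ?thesis
    by (subst (asm) ennreal_inj) (auto intro!: sum_nonneg)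
qed

lemma pmf_bind_finite:
  assumes "finite (set_pmf P)"
  shows "pmf (bind_pmf P F) x = (\<Sum>z\<in>set_pmf P. pmf P z * pmf (F z) x)"
  unfolding pmf_bind using assms
  by (subst integral_measure_pmf_real[where A = "set_pmf P"]) (auto simp: mult.commute)

text \<open>For finitely supported \<open>P\<close> this is \<open>sup\<^sub>T (P T - e Q T)\<close>; for infinite support the sum is
  junk (zero), hence the finiteness hypotheses below.\<close>

definition hockey_stick :: "real \<Rightarrow> 'a pmf \<Rightarrow> 'a pmf \<Rightarrow> real" where
  "hockey_stick e P Q = (\<Sum>x\<in>set_pmf P. max 0 (pmf P x - e * pmf Q x))"

lemma hockey_stick_eq_sum:
  assumes "finite S" "set_pmf P \<subseteq> S" "0 \<le> e"
  shows "hockey_stick e P Q = (\<Sum>x\<in>S. max 0 (pmf P x - e * pmf Q x))"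
  unfolding hockey_stick_def
  using assms by (intro sum.mono_neutral_left) (auto simp: set_pmf_iff)

lemma hockey_stick_nonneg: "0 \<le> hockey_stick e P Q"
  unfolding hockey_stick_def by (intro sum_nonneg) auto

lemma hockey_stick_le_1:
  assumes "0 \<le> e"
  shows "hockey_stick e P Q \<le> 1"
proof (cases "finite (set_pmf P)")
  case True
  have "hockey_stick e P Q \<le> (\<Sum>x\<in>set_pmf P. pmf P x)"
    unfolding hockey_stick_def using assms by (intro sum_mono) auto
  also have "\<dots> = 1" using True by (rule sum_pmf_eq_1) auto
  finally show ?thesis .
qed (simp add: hockey_stick_def)

lemma hockey_stick_antimono:
  assumes "e \<le> e'"
  shows "hockey_stick e' P Q \<le> hockey_stick e P Q"
  unfolding hockey_stick_def
  using assms by (intro sum_mono max.mono diff_left_mono mult_right_mono) auto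

lemma hockey_stick_le_prob:
  assumes "0 \<le> e" and "\<And>x. x \<notin> A \<Longrightarrow> pmf P x \<le> e * pmf Q x"
  shows "hockey_stick e P Q \<le> measure_pmf.prob P A"
proof (cases "finite (set_pmf P)")
  case True
  have "hockey_stick e P Q \<le> (\<Sum>x\<in>set_pmf P. if x \<in> A then pmf P x else 0)"
    unfolding hockey_stick_def using assms by (intro sum_mono) auto
  also have "\<dots> = measure_pmf.prob P (set_pmf P \<inter> A)"
    using True by (simp add: sum.inter_restrict measure_measure_pmf_finite)
  also have "\<dots> = measure_pmf.prob P A"
    by (simp add: measure_Int_set_pmf Int_commute)
  finally show ?thesis .
qed (simp add: hockey_stick_def)

lemma prob_bind_le_hockey_stick:
  assumes fin: "finite (set_pmf P)" "finite (set_pmf Q)" and "0 \<le> e"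
  shows "measure_pmf.prob (bind_pmf P g) T \<le> e * measure_pmf.prob (bind_pmf Q g) T + hockey_stick e P Q"
proof -
  define S where "S = set_pmf P \<union> set_pmf Q"
  define f where "f x = measure_pmf.prob (g x) T" for x
  have "finite S" using fin by (simp add: S_def)
  have f01: "0 \<le> f x" "f x \<le> 1" for x by (auto simp: f_def)
  have "(\<Sum>x\<in>S. pmf P x * f x) \<le> (\<Sum>x\<in>S. e * (pmf Q x * f x) + max 0 (pmf P x - e * pmf Q x))"
  proof (intro sum_mono)
    fix x
    have "pmf P x * f x \<le> (e * pmf Q x + max 0 (pmf P x - e * pmf Q x)) * f x"
      using f01[of x] by (intro mult_right_mono) auto
    also have "\<dots> \<le> e * (pmf Q x * f x) + max 0 (pmf P x - e * pmf Q x)"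
      using f01[of x] by (simp add: algebra_simps) (rule mult_left_le_one_le, auto)
    finally show "pmf P x * f x \<le> e * (pmf Q x * f x) + max 0 (pmf P x - e * pmf Q x)" .
  qed
  also have "\<dots> = e * (\<Sum>x\<in>S. pmf Q x * f x) + hockey_stick e P Q"
    using \<open>finite S\<close> \<open>0 \<le> e\<close>
    by (simp add: sum.distrib sum_distrib_left hockey_stick_eq_sum[of S] S_def)
  finally show ?thesis
    using \<open>finite S\<close> by (simp add: prob_bind_pmf_eq_sum[of S] f_def S_def)
qed

lemma hockey_stick_bind_le:
  assumes fin: "finite (set_pmf M)" "\<And>z. z \<in> set_pmf M \<Longrightarrow> finite (set_pmf (F z))"
    and "0 \<le> e"
  shows "hockey_stick e (bind_pmf M F) (bind_pmf M G) \<le> (\<Sum>z\<in>set_pmf M. pmf M z * hockey_stick e (F z) (G z))"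
proof -
  define S where "S = (\<Union>z\<in>set_pmf M. set_pmf (F z))"
  define d where "d z x = pmf (F z) x - e * pmf (G z) x" for z x
  have "finite S" using fin by (auto simp: S_def)
  have "hockey_stick e (bind_pmf M F) (bind_pmf M G) = (\<Sum>x\<in>S. max 0 (\<Sum>z\<in>set_pmf M. pmf M z * d z x))"
    using \<open>finite S\<close> \<open>0 \<le> e\<close>
    by (subst hockey_stick_eq_sum[of S]) (auto simp: S_def d_def pmf_bind_finite[OF fin(1)]
        sum_subtractf sum_distrib_left algebra_simps)
  also have "\<dots> \<le> (\<Sum>x\<in>S. \<Sum>z\<in>set_pmf M. pmf M z * max 0 (d z x))"
    by (intro sum_mono max.boundedI sum_nonneg sum_mono mult_left_mono) auto
  also have "\<dots> = (\<Sum>z\<in>set_pmf M. pmf M z * (\<Sum>x\<in>S. max 0 (d z x)))"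
    by (subst sum.swap) (simp add: sum_distrib_left)
  also have "\<dots> = (\<Sum>z\<in>set_pmf M. pmf M z * hockey_stick e (F z) (G z))"
  proof (intro sum.cong refl)
    fix z assume "z \<in> set_pmf M"
    then have "set_pmf (F z) \<subseteq> S" by (auto simp: S_def)
    then show "pmf M z * (\<Sum>x\<in>S. max 0 (d z x)) = pmf M z * hockey_stick e (F z) (G z)"
      using hockey_stick_eq_sum[OF \<open>finite S\<close> _ \<open>0 \<le> e\<close>] by (simp add: d_def)
  qed
  finally show ?thesis .
qed

lemma hockey_stick_map_inj:
  assumes "inj f"
  shows "hockey_stick e (map_pmf f P) (map_pmf f Q) = hockey_stick e P Q"
  unfolding hockey_stick_def set_map_pmf using assms
  by (subst sum.reindex) (auto intro: inj_on_subset simp: pmf_map_inj')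

lemma hockey_stick_bind_map_le:
  assumes "finite (set_pmf M)" "finite (set_pmf P)" "0 \<le> e" "\<And>k. inj (f k)"
  shows "hockey_stick e (bind_pmf M (\<lambda>k. map_pmf (f k) P)) (bind_pmf M (\<lambda>k. map_pmf (f k) Q))
    \<le> hockey_stick e P Q"
proof -
  have "hockey_stick e (bind_pmf M (\<lambda>k. map_pmf (f k) P)) (bind_pmf M (\<lambda>k. map_pmf (f k) Q))
      \<le> (\<Sum>k\<in>set_pmf M. pmf M k * hockey_stick e (map_pmf (f k) P) (map_pmf (f k) Q))"
    using assms(1-3) by (intro hockey_stick_bind_le) auto
  also have "\<dots> = hockey_stick e P Q"
    using assms(1,4) by (simp add: hockey_stick_map_inj sum_distrib_right[symmetric] sum_pmf_eq_1)
  finally show ?thesis .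
qed

section \<open>The number of ones determines the shuffled view\<close>

definition count_ones :: "bool list \<Rightarrow> nat" where
  "count_ones ys = length (filter id ys)"

definition ones_pmf :: "('a \<Rightarrow> bool pmf) \<Rightarrow> 'a list \<Rightarrow> nat pmf" where
  "ones_pmf R xs = map_pmf count_ones (encode_all R xs)"

lemma ones_pmf_Nil: "ones_pmf R [] = return_pmf 0"
  by (simp add: ones_pmf_def count_ones_def)

lemma ones_pmf_Cons:
  "ones_pmf R (x # xs) = bind_pmf (R x) (\<lambda>y. map_pmf (\<lambda>c. of_bool y + c) (ones_pmf R xs))"
  by (auto simp: ones_pmf_def count_ones_def map_bind_pmf map_pmf_def[symmetric] pmf.map_comp o_def
      intro!: bind_pmf_cong map_pmf_cong)

lemma ones_pmf_append_Cons:
  "ones_pmf R (xs @ x # ys) = bind_pmf (ones_pmf R (xs @ ys)) (\<lambda>k. map_pmf (\<lambda>y. k + of_bool y) (R x))"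
proof (induction xs)
  case Nil
  show ?case
    by (simp add: ones_pmf_Cons map_pmf_def bind_assoc_pmf bind_return_pmf add.commute)
      (subst bind_commute_pmf, rule refl)
next
  case (Cons z xs)
  show ?case
    by (simp add: ones_pmf_Cons Cons.IH map_pmf_def bind_assoc_pmf bind_return_pmf add_ac)
qed

lemma length_encode_all: "ys \<in> set_pmf (encode_all R xs) \<Longrightarrow> length ys = length xs"
  by (induction xs arbitrary: ys) auto

lemma set_pmf_ones_pmf: "set_pmf (ones_pmf R xs) \<subseteq> {..length xs}"
proof
  fix k assume "k \<in> set_pmf (ones_pmf R xs)"
  then obtain ys where ys: "ys \<in> set_pmf (encode_all R xs)" "k = count_ones ys"
    by (auto simp: ones_pmf_def)
  then show "k \<in> {..length xs}"
    using length_encode_all[OF ys(1)] length_filter_le[of id ys] by (simp add: count_ones_def)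
qed

lemma finite_set_pmf_ones_pmf: "finite (set_pmf (ones_pmf R xs))"
  using set_pmf_ones_pmf by (rule finite_subset) simp

lemma shuffler_cong_mset:
  assumes "mset xs = mset ys"
  shows "shuffler xs = shuffler ys"
proof -
  obtain \<pi> where \<pi>: "\<pi> permutes {..<length ys}" "permute_list \<pi> ys = xs"
    using mset_eq_permutation[OF assms] by blast
  define A where "A = {\<sigma>. \<sigma> permutes {..<length ys}}"
  have A: "finite A" "A \<noteq> {}"
    by (auto simp: A_def finite_permutations intro: permutes_id)
  have "bij_betw ((\<circ>) \<pi>) A A"
  proof (rule bij_betwI[where g = "(\<circ>) (inv \<pi>)"])
    show "(\<circ>) \<pi> \<in> A \<rightarrow> A" "(\<circ>) (inv \<pi>) \<in> A \<rightarrow> A"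
      using \<pi>(1) permutes_inv[OF \<pi>(1)] by (simp_all add: A_def Pi_def permutes_compose)
    show "inv \<pi> \<circ> (\<pi> \<circ> \<sigma>) = \<sigma>" "\<pi> \<circ> (inv \<pi> \<circ> \<sigma>) = \<sigma>" for \<sigma>
      by (simp_all add: o_assoc permutes_inv_o[OF \<pi>(1)])
  qed
  then have perm: "map_pmf ((\<circ>) \<pi>) (pmf_of_set A) = pmf_of_set A"
    using A by (intro map_pmf_of_set_bij_betw)
  have "shuffler xs = bind_pmf (pmf_of_set A) (\<lambda>\<sigma>. return_pmf (permute_list (\<pi> \<circ> \<sigma>) ys))"
    unfolding shuffler_def mset_eq_length[OF assms] A_def[symmetric]
  proof (rule bind_pmf_cong[OF refl])
    fix \<sigma> assume "\<sigma> \<in> set_pmf (pmf_of_set A)"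
    then have "\<sigma> permutes {..<length ys}" using A by (simp add: A_def)
    then show "return_pmf (permute_list \<sigma> xs) = return_pmf (permute_list (\<pi> \<circ> \<sigma>) ys)"
      by (simp add: permute_list_compose \<pi>(2))
  qed
  also have "\<dots> = bind_pmf (map_pmf ((\<circ>) \<pi>) (pmf_of_set A)) (\<lambda>\<sigma>. return_pmf (permute_list \<sigma> ys))"
    by (simp add: bind_map_pmf)
  also have "\<dots> = shuffler ys"
    unfolding perm by (simp add: shuffler_def A_def)
  finally show ?thesis .
qed

lemma mset_eq_replicate_count_ones:
  "mset ys = mset (replicate (count_ones ys) True @ replicate (length ys - count_ones ys) False)"
proof -
  have "length (filter Not ys) = length ys - count_ones ys"
    using sum_length_filter_compl[of id ys] by (simp add: count_ones_def comp_def)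
  moreover have "filter ((=) True) ys = filter id ys" "filter ((=) False) ys = filter Not ys"
    by (induction ys) auto
  ultimately show ?thesis
    by (intro multiset_eqI) (simp add: count_ones_def count_mset count_list_eq_length_filter split: bool.split)
qed

lemma shuffled_view_eq_bind_ones_pmf:
  "shuffled_view R xs =
     bind_pmf (ones_pmf R xs) (\<lambda>k. shuffler (replicate k True @ replicate (length xs - k) False))"
  unfolding shuffled_view_def ones_pmf_def bind_map_pmf
proof (rule bind_pmf_cong[OF refl])
  fix ys assume "ys \<in> set_pmf (encode_all R xs)"
  then show "shuffler ys = shuffler (replicate (count_ones ys) True @ replicate (length xs - count_ones ys) False)"
    using shuffler_cong_mset[OF mset_eq_replicate_count_ones[of ys]] by (simp add: length_encode_all)
qed

lemma prob_shuffled_view_le: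
  assumes "0 \<le> e" "length xs' = length xs"
  shows "measure_pmf.prob (shuffled_view R xs) T \<le>
     e * measure_pmf.prob (shuffled_view R xs') T + hockey_stick e (ones_pmf R xs) (ones_pmf R xs')"
  using assms by (simp add: shuffled_view_eq_bind_ones_pmf prob_bind_le_hockey_stick
      finite_set_pmf_ones_pmf)

section \<open>Conditioning on the users that send a fair coin\<close>

text \<open>When each user independently replaces its bit by a fair coin with probability \<open>p\<close>,
  \<open>coin_split p zs\<close> is the joint law of the number of ones among the truthful reports and
  the number of users that send a coin.\<close>

fun coin_split :: "real \<Rightarrow> bool list \<Rightarrow> (nat \<times> nat) pmf" where
  "coin_split p [] = return_pmf (0, 0)"
| "coin_split p (z # zs) = bind_pmf (bernoulli_pmf p)
     (\<lambda>b. map_pmf (\<lambda>(c, m). if b then (c, Suc m) else (c + of_bool z, m)) (coin_split p zs))"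

lemma finite_set_pmf_coin_split: "finite (set_pmf (coin_split p zs))"
  by (induction zs) (auto simp: split_beta)

lemma map_snd_coin_split:
  assumes "p \<in> {0..1}"
  shows "map_pmf snd (coin_split p zs) = binomial_pmf (length zs) p"
proof (induction zs)
  case Nil
  then show ?case using assms by (simp add: binomial_pmf_0)
next
  case (Cons z zs)
  have "map_pmf snd (coin_split p (z # zs)) =
      bind_pmf (bernoulli_pmf p) (\<lambda>b. map_pmf (\<lambda>m. if b then Suc m else m) (map_pmf snd (coin_split p zs)))"
    by (simp add: map_bind_pmf pmf.map_comp o_def split_beta if_distrib cong: if_cong)
  also have "\<dots> = binomial_pmf (Suc (length zs)) p"
    using assms unfolding Cons.IH
    by (subst binomial_pmf_Suc) (auto simp: map_pmf_def intro!: bind_pmf_cong)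
  finally show ?case by simp
qed

lemma binomial_pmf_half_Suc:
  "binomial_pmf (Suc m) (1/2) =
     bind_pmf (bernoulli_pmf (1/2)) (\<lambda>y. map_pmf (\<lambda>k. of_bool y + k) (binomial_pmf m (1/2)))"
  by (subst binomial_pmf_Suc) (auto simp: map_pmf_def intro!: bind_pmf_cong)

lemma ones_pmf_bitsum_encoder:
  assumes "p = lam / real n" "p \<in> {0..1}"
  shows "ones_pmf (bitsum_encoder n lam) zs =
     bind_pmf (coin_split p zs) (\<lambda>(c, m). map_pmf ((+) c) (binomial_pmf m (1/2)))"
proof (induction zs)
  case Nil
  then show ?case by (simp add: ones_pmf_Nil binomial_pmf_0 bind_return_pmf)
next
  case (Cons z zs)
  define G where "G = (\<lambda>(c, m). map_pmf ((+) c) (binomial_pmf m (1/2)))"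
  define step where "step b cm = (if b then (fst cm, Suc (snd cm)) else (fst cm + of_bool z, snd cm))"
    for b :: bool and cm :: "nat \<times> nat"
  have coin: "bind_pmf (bernoulli_pmf (1/2)) (\<lambda>y. map_pmf (\<lambda>c. of_bool y + c) (bind_pmf (coin_split p zs) G)) =
      bind_pmf (coin_split p zs) (\<lambda>cm. G (step True cm))"
  proof -
    have "bind_pmf (bernoulli_pmf (1/2)) (\<lambda>y. map_pmf (\<lambda>c. of_bool y + c) (bind_pmf (coin_split p zs) G)) =
        bind_pmf (coin_split p zs) (\<lambda>cm. bind_pmf (bernoulli_pmf (1/2))
          (\<lambda>y. map_pmf (\<lambda>c. of_bool y + c) (G cm)))"
      by (simp add: map_bind_pmf) (subst bind_commute_pmf, rule refl)
    also have "\<dots> = bind_pmf (coin_split p zs) (\<lambda>cm. G (step True cm))"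
      by (auto simp: G_def step_def split_beta binomial_pmf_half_Suc map_bind_pmf pmf.map_comp o_def
          add_ac intro!: bind_pmf_cong map_pmf_cong)
    finally show ?thesis .
  qed
  have truthful: "map_pmf (\<lambda>c. of_bool z + c) (bind_pmf (coin_split p zs) G) =
      bind_pmf (coin_split p zs) (\<lambda>cm. G (step False cm))"
    by (auto simp: G_def step_def split_beta map_bind_pmf pmf.map_comp o_def add_ac
        intro!: bind_pmf_cong map_pmf_cong)
  have "ones_pmf (bitsum_encoder n lam) (z # zs) =
     bind_pmf (bernoulli_pmf p) (\<lambda>b. bind_pmf (if b then bernoulli_pmf (1/2) else return_pmf z)
        (\<lambda>y. map_pmf (\<lambda>c. of_bool y + c) (bind_pmf (coin_split p zs) G)))"
    by (simp add: ones_pmf_Cons Cons.IH bitsum_encoder_def bind_assoc_pmf assms(1) G_def)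
  also have "\<dots> = bind_pmf (bernoulli_pmf p) (\<lambda>b. bind_pmf (coin_split p zs) (\<lambda>cm. G (step b cm)))"
    using coin truthful by (intro bind_pmf_cong refl) (auto simp: bind_return_pmf)
  also have "\<dots> = bind_pmf (coin_split p (z # zs)) G"
    by (simp add: bind_assoc_pmf map_pmf_def bind_return_pmf split_beta step_def)
  finally show ?case by (simp add: G_def)
qed

definition blanket :: "nat \<Rightarrow> bool pmf \<Rightarrow> nat pmf" where
  "blanket m P = bind_pmf (binomial_pmf m (1/2)) (\<lambda>k. map_pmf (\<lambda>y. k + of_bool y) P)"

lemma set_pmf_blanket: "set_pmf (blanket m P) \<subseteq> {..Suc m}"
  unfolding blanket_def by (auto simp: set_pmf_binomial)

lemma finite_set_pmf_blanket: "finite (set_pmf (blanket m P))"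
  using set_pmf_blanket by (rule finite_subset) simp

lemma ones_pmf_bitsum_encoder_append_Cons:
  assumes "p = lam / real n" "p \<in> {0..1}"
  shows "ones_pmf (bitsum_encoder n lam) (xs @ x # ys) =
     bind_pmf (coin_split p (xs @ ys)) (\<lambda>(c, m). map_pmf ((+) c) (blanket m (bitsum_encoder n lam x)))"
  unfolding ones_pmf_append_Cons ones_pmf_bitsum_encoder[OF assms]
  by (simp add: bind_assoc_pmf case_prod_unfold blanket_def map_bind_pmf bind_map_pmf pmf.map_comp o_def
      add_ac)

lemma hockey_stick_ones_pmf_bitsum_le:
  fixes xs ys :: "bool list"
  assumes "p = lam / real n" "p \<in> {0..1}" "0 \<le> e"
  defines "R \<equiv> bitsum_encoder n lam" and "N \<equiv> length xs + length ys"
  shows "hockey_stick e (ones_pmf R (xs @ x # ys)) (ones_pmf R (xs @ x' # ys))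
    \<le> (\<Sum>k\<le>N. pmf (binomial_pmf N p) k * hockey_stick e (blanket k (R x)) (blanket k (R x')))"
proof -
  define h where "h k = hockey_stick e (blanket k (R x)) (blanket k (R x'))" for k
  define M where "M = coin_split p (xs @ ys)"
  have "hockey_stick e (ones_pmf R (xs @ x # ys)) (ones_pmf R (xs @ x' # ys))
     \<le> (\<Sum>z\<in>set_pmf M. pmf M z * hockey_stick e (map_pmf ((+) (fst z)) (blanket (snd z) (R x)))
                                         (map_pmf ((+) (fst z)) (blanket (snd z) (R x'))))"
    unfolding R_def ones_pmf_bitsum_encoder_append_Cons[OF assms(1,2)] M_def split_beta
    using assms(3) by (intro hockey_stick_bind_le) (auto simp: finite_set_pmf_coin_split finite_set_pmf_blanket)
  also have "\<dots> = measure_pmf.expectation M (h \<circ> snd)"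
    by (subst integral_measure_pmf_real[where A = "set_pmf M"])
      (auto simp: M_def finite_set_pmf_coin_split hockey_stick_map_inj h_def mult.commute)
  also have "\<dots> = measure_pmf.expectation (map_pmf snd M) h"
    by (simp add: o_def)
  also have "\<dots> = measure_pmf.expectation (binomial_pmf N p) h"
    using assms(2) by (simp add: M_def N_def map_snd_coin_split)
  also have "\<dots> = (\<Sum>k\<le>N. pmf (binomial_pmf N p) k * h k)"
    using assms(2) by (subst integral_measure_pmf_real[where A = "{..N}"])
      (auto simp: set_pmf_binomial_eq mult.commute split: if_splits)
  finally show ?thesis by (simp add: h_def)
qed

section \<open>Hockey-stick bounds for the blanket\<close>

lemma bitsum_encoder_eq_bernoulli:
  assumes "p = lam / real n" "p \<in> {0..1}"
  shows "bitsum_encoder n lam x = bernoulli_pmf (if x then 1 - p/2 else p/2)"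
proof (rule pmf_eqI)
  fix y :: bool
  show "pmf (bitsum_encoder n lam x) y = pmf (bernoulli_pmf (if x then 1 - p/2 else p/2)) y"
    unfolding bitsum_encoder_def pmf_bind using assms
    by (subst integral_bernoulli_pmf) (auto simp: assms(1)[symmetric] pmf_return algebra_simps
        split: split_indicator)
qed

lemma prob_bind_bernoulli_if:
  assumes "a \<in> {0..1}"
  shows "measure_pmf.prob (bind_pmf (bernoulli_pmf a) (\<lambda>y. if y then P else Q)) A =
    a * measure_pmf.prob P A + (1 - a) * measure_pmf.prob Q A"
  using assms by (subst prob_bind_pmf_eq_sum[of UNIV]) (auto simp: UNIV_bool)

lemma pmf_bind_bernoulli_if:
  assumes "a \<in> {0..1}"
  shows "pmf (bind_pmf (bernoulli_pmf a) (\<lambda>y. if y then P else Q)) s = a * pmf P s + (1 - a) * pmf Q s"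
  using prob_bind_bernoulli_if[OF assms, of P Q "{s}"] by (simp add: measure_pmf_single)

lemma hockey_stick_bind_bernoulli_le:
  assumes fin: "finite (set_pmf P)" "finite (set_pmf Q)" and ab: "a \<in> {0..1}" "b \<in> {0..1}"
  shows "hockey_stick 1 (bind_pmf (bernoulli_pmf a) (\<lambda>y. if y then P else Q))
                        (bind_pmf (bernoulli_pmf b) (\<lambda>y. if y then P else Q))
    \<le> \<bar>a - b\<bar> * max (hockey_stick 1 P Q) (hockey_stick 1 Q P)"
proof -
  define S where "S = set_pmf P \<union> set_pmf Q"
  have "finite S" using fin by (simp add: S_def)
  have sub: "set_pmf P \<subseteq> S" "set_pmf Q \<subseteq> S" by (auto simp: S_def)
  have "set_pmf (bind_pmf (bernoulli_pmf a) (\<lambda>y. if y then P else Q)) \<subseteq> S"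
    by (auto simp: S_def split: if_splits)
  then have "hockey_stick 1 (bind_pmf (bernoulli_pmf a) (\<lambda>y. if y then P else Q))
                        (bind_pmf (bernoulli_pmf b) (\<lambda>y. if y then P else Q))
      = (\<Sum>s\<in>S. max 0 ((a - b) * (pmf P s - pmf Q s)))"
    using \<open>finite S\<close> ab by (simp add: hockey_stick_eq_sum[of S] pmf_bind_bernoulli_if algebra_simps)
  also have "\<dots> \<le> \<bar>a - b\<bar> * max (hockey_stick 1 P Q) (hockey_stick 1 Q P)"
  proof (cases "b \<le> a")
    case True
    then have "(\<Sum>s\<in>S. max 0 ((a - b) * (pmf P s - pmf Q s))) = (a - b) * hockey_stick 1 P Q"
      using \<open>finite S\<close> sub by (simp add: hockey_stick_eq_sum[of S] sum_distrib_left max_mult_distrib_left)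
    then show ?thesis
      using True by (simp add: mult_left_mono hockey_stick_nonneg)
  next
    case False
    then have "(\<Sum>s\<in>S. max 0 ((a - b) * (pmf P s - pmf Q s))) = (b - a) * hockey_stick 1 Q P"
      using \<open>finite S\<close> sub
      by (simp add: hockey_stick_eq_sum[of S] sum_distrib_left max_mult_distrib_left algebra_simps)
    then show ?thesis
      using False by (simp add: mult_left_mono hockey_stick_nonneg)
  qed
  finally show ?thesis .
qed

lemma blanket_bernoulli:
  "blanket m (bernoulli_pmf a) = bind_pmf (bernoulli_pmf a)
     (\<lambda>y. if y then map_pmf Suc (binomial_pmf m (1/2)) else binomial_pmf m (1/2))"
  unfolding blanket_def map_pmf_def
  by (subst bind_commute_pmf) (auto intro!: bind_pmf_cong simp: bind_return_pmf' bind_return_pmf)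

text \<open>Split off one fair coin; shifting a single coin by one costs total variation \<open>1/2\<close>.\<close>

lemma hockey_stick_shift_binomial_half:
  assumes "0 < m"
  shows "hockey_stick 1 (map_pmf Suc (binomial_pmf m (1/2))) (binomial_pmf m (1/2)) \<le> 1/2"
    and "hockey_stick 1 (binomial_pmf m (1/2)) (map_pmf Suc (binomial_pmf m (1/2))) \<le> 1/2"
proof -
  define B where "B = binomial_pmf (m - 1) (1/2)"
  define coin where "coin = (map_pmf of_bool (bernoulli_pmf (1/2)) :: nat pmf)"
  have coin_fin: "finite (set_pmf coin)" "finite (set_pmf (map_pmf Suc coin))"
    by (simp_all add: coin_def)
  have "binomial_pmf (Suc (m - 1)) (1/2) = bind_pmf B (\<lambda>k. map_pmf ((+) k) coin)"
    unfolding binomial_pmf_half_Suc B_def coin_def map_pmf_def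
    by (subst bind_commute_pmf) (simp add: bind_assoc_pmf bind_return_pmf add.commute)
  then have binomial: "binomial_pmf m (1/2) = bind_pmf B (\<lambda>k. map_pmf ((+) k) coin)"
    using assms by simp
  have shifted: "map_pmf Suc (binomial_pmf m (1/2)) = bind_pmf B (\<lambda>k. map_pmf ((+) k) (map_pmf Suc coin))"
    by (simp add: binomial map_bind_pmf pmf.map_comp o_def)
  have mix: "hockey_stick 1 (bind_pmf B (\<lambda>k. map_pmf ((+) k) P)) (bind_pmf B (\<lambda>k. map_pmf ((+) k) Q))
      \<le> hockey_stick 1 P Q" if "finite (set_pmf P)" for P Q :: "nat pmf"
    using that by (intro hockey_stick_bind_map_le) (auto simp: B_def)
  have "pmf coin k = (if k \<le> 1 then 1/2 else 0)" for k
    unfolding coin_def map_pmf_def pmf_bind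
    by (subst integral_bernoulli_pmf) (auto simp: pmf_return split: split_indicator)
  moreover have "pmf (map_pmf Suc coin) k = (if 1 \<le> k \<and> k \<le> 2 then 1/2 else 0)" for k
    using calculation pmf_map_inj'[of Suc coin] by (cases k) (auto simp: pmf_eq_0_set_pmf)
  moreover have "set_pmf coin \<subseteq> {0, 1, 2}" "set_pmf (map_pmf Suc coin) \<subseteq> {0, 1, 2}"
    by (auto simp: coin_def)
  ultimately have "hockey_stick 1 (map_pmf Suc coin) coin \<le> 1/2" "hockey_stick 1 coin (map_pmf Suc coin) \<le> 1/2"
    by (simp_all add: hockey_stick_eq_sum[of "{0, 1, 2}"])
  then show "hockey_stick 1 (map_pmf Suc (binomial_pmf m (1/2))) (binomial_pmf m (1/2)) \<le> 1/2"
    and "hockey_stick 1 (binomial_pmf m (1/2)) (map_pmf Suc (binomial_pmf m (1/2))) \<le> 1/2"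
    unfolding shifted unfolding binomial using mix coin_fin by (meson order_trans)+
qed

lemma hockey_stick_blanket_le_tv:
  assumes "1 \<le> e" "a \<in> {0..1}" "b \<in> {0..1}"
  shows "hockey_stick e (blanket m (bernoulli_pmf a)) (blanket m (bernoulli_pmf b))
    \<le> \<bar>a - b\<bar> * (if m = 0 then 1 else 1/2)"
proof -
  define B where "B = binomial_pmf m (1/2)"
  have "max (hockey_stick 1 (map_pmf Suc B) B) (hockey_stick 1 B (map_pmf Suc B)) \<le> (if m = 0 then 1 else 1/2)"
    using hockey_stick_shift_binomial_half[of m] hockey_stick_le_1[of 1] by (auto simp: B_def)
  moreover have "finite (set_pmf (map_pmf Suc B))" "finite (set_pmf B)"
    by (simp_all add: B_def)
  then have "hockey_stick 1 (blanket m (bernoulli_pmf a)) (blanket m (bernoulli_pmf b))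
      \<le> \<bar>a - b\<bar> * max (hockey_stick 1 (map_pmf Suc B) B) (hockey_stick 1 B (map_pmf Suc B))"
    unfolding blanket_bernoulli B_def[symmetric] by (rule hockey_stick_bind_bernoulli_le[OF _ _ assms(2,3)])
  moreover have "hockey_stick e (blanket m (bernoulli_pmf a)) (blanket m (bernoulli_pmf b))
      \<le> hockey_stick 1 (blanket m (bernoulli_pmf a)) (blanket m (bernoulli_pmf b))"
    by (rule hockey_stick_antimono[OF assms(1)])
  ultimately show ?thesis
    by (meson abs_ge_zero mult_left_mono order_trans)
qed

lemma mixture_le_exp_mixture:
  fixes a b q x w \<epsilon> :: real
  assumes "0 \<le> q" "a \<in> {q..1 - q}" "b \<in> {q..1 - q}" "0 \<le> x" "0 \<le> w" "0 \<le> \<epsilon>"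
    and ratio: "(1 - 2 * q) * \<bar>x - w\<bar> \<le> \<epsilon> * min x w"
  shows "a * x + (1 - a) * w \<le> exp \<epsilon> * (b * x + (1 - b) * w)"
proof -
  have "min x w \<le> b * x + (1 - b) * w"
  proof (cases "x \<le> w")
    case True
    then have "(1 - b) * x \<le> (1 - b) * w" using assms(1,3) by (intro mult_left_mono) auto
    then show ?thesis using True by (simp add: algebra_simps)
  next
    case False
    then have "b * w \<le> b * x" using assms(1,3) by (intro mult_left_mono) auto
    then show ?thesis using False by (simp add: algebra_simps)
  qed
  have "(a - b) * (x - w) \<le> \<bar>a - b\<bar> * \<bar>x - w\<bar>"
    by (metis abs_ge_self abs_mult)
  also have "\<dots> \<le> (1 - 2 * q) * \<bar>x - w\<bar>"
    using assms(2,3) by (intro mult_right_mono) auto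
  also have "\<dots> \<le> \<epsilon> * (b * x + (1 - b) * w)"
    using ratio mult_left_mono[OF \<open>min x w \<le> _\<close> \<open>0 \<le> \<epsilon>\<close>] by linarith
  finally have "a * x + (1 - a) * w \<le> (1 + \<epsilon>) * (b * x + (1 - b) * w)"
    by (simp add: algebra_simps)
  also have "\<dots> \<le> exp \<epsilon> * (b * x + (1 - b) * w)"
    using assms(1,3-5) by (intro mult_right_mono exp_ge_add_one_self) auto
  finally show ?thesis .
qed

lemma pmf_binomial_half_ratio:
  assumes "1 \<le> s" "s \<le> m"
  shows "pmf (binomial_pmf m (1/2)) (s - 1) * (real m + 1 - real s) = pmf (binomial_pmf m (1/2)) s * real s"
proof -
  have pmf_eq: "pmf (binomial_pmf m (1/2)) k = real (m choose k) / 2 ^ m" if "k \<le> m" for k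
  proof -
    have "(1/2::real) ^ k * (1/2) ^ (m - k) = (1/2) ^ m"
      using that by (simp add: power_add[symmetric])
    then show ?thesis by (simp add: power_one_over)
  qed
  have "s * (m choose s) = m * (m - 1 choose (s - 1))"
    using assms by (intro times_binomial_minus1_eq) auto
  moreover have "(m - (s - 1)) * (m choose (s - 1)) = m * (m - 1 choose (s - 1))"
    by (rule binomial_absorb_comp)
  ultimately have "(m choose (s - 1)) * (m + 1 - s) = (m choose s) * s"
    using assms by (simp add: Suc_diff_le mult.commute)
  then have "real (m choose (s - 1)) * real (m + 1 - s) = real (m choose s) * real s"
    by (metis of_nat_mult)
  moreover have "real (m + 1 - s) = real m + 1 - real s"
    using assms by auto
  ultimately show ?thesis
    using assms by (simp only: pmf_eq) (simp add: field_simps)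
qed

lemma pmf_blanket_le_exp_pmf_blanket:
  fixes q a b \<epsilon> t :: real
  assumes "0 \<le> q" "a \<in> {q..1 - q}" "b \<in> {q..1 - q}" "0 \<le> \<epsilon>"
    and "4 * t \<le> real m + 1" "8 * (1 - 2 * q) * t \<le> \<epsilon> * (real m + 1)"
    and s: "1 \<le> s" "s \<le> m" "\<bar>2 * real s - (real m + 1)\<bar> \<le> 2 * t"
  shows "pmf (blanket m (bernoulli_pmf a)) s \<le> exp \<epsilon> * pmf (blanket m (bernoulli_pmf b)) s"
proof -
  define B where "B = binomial_pmf m (1/2)"
  define x where "x = real s"
  define w where "w = real m + 1 - real s"
  have xw: "(real m + 1) / 4 \<le> x" "(real m + 1) / 4 \<le> w"
    using assms(5) s(3) by (auto simp: x_def w_def abs_le_iff)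
  have "(1 - 2 * q) * \<bar>x - w\<bar> \<le> (1 - 2 * q) * (2 * t)"
    using assms(2) s(3) by (intro mult_left_mono) (auto simp: x_def w_def)
  also have "\<dots> \<le> \<epsilon> * ((real m + 1) / 4)"
    using assms(6) by (simp add: algebra_simps)
  also have "\<dots> \<le> \<epsilon> * min x w"
    using xw assms(4) by (intro mult_left_mono) auto
  finally have mix: "a * x + (1 - a) * w \<le> exp \<epsilon> * (b * x + (1 - b) * w)"
    using xw by (intro mixture_le_exp_mixture[OF assms(1-3) _ _ assms(4)]) auto
  define c where "c = pmf B s / w"
  have "0 < w" "0 \<le> c" using s by (auto simp: w_def c_def)
  have "pmf (map_pmf Suc B) s = pmf B (s - 1)"
    using s(1) pmf_map_inj'[of Suc B "s - 1"] by simp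
  also have "\<dots> = c * x"
    using pmf_binomial_half_ratio[OF s(1,2), folded B_def w_def x_def] \<open>0 < w\<close>
    by (simp add: c_def field_simps)
  finally have pmf_eq: "pmf (blanket m (bernoulli_pmf a')) s = c * (a' * x + (1 - a') * w)"
    if "a' \<in> {0..1}" for a'
    using that \<open>0 < w\<close> by (simp add: blanket_bernoulli pmf_bind_bernoulli_if B_def[symmetric] c_def
        field_simps)
  show ?thesis
    using assms(1-3) mult_left_mono[OF mix \<open>0 \<le> c\<close>] by (simp add: pmf_eq algebra_simps)
qed

text \<open>Inside a window of half-width \<open>t\<close> around the mean the likelihood ratio of the two blankets is
  at most \<open>e\<^sup>\<epsilon>\<close>; Hoeffding's inequality bounds the mass outside it.\<close>

lemma hockey_stick_blanket_le_hoeffding: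
  fixes q a b \<epsilon> t :: real
  assumes "0 \<le> q" "a \<in> {q..1 - q}" "b \<in> {q..1 - q}" "0 \<le> \<epsilon>"
    and "0 < m" "1/2 \<le> t" "4 * t \<le> real m + 1" "8 * (1 - 2 * q) * t \<le> \<epsilon> * (real m + 1)"
  shows "hockey_stick (exp \<epsilon>) (blanket m (bernoulli_pmf a)) (blanket m (bernoulli_pmf b))
    \<le> 2 * exp (- 2 * (t - 1/2)\<^sup>2 / real m)"
proof -
  define B where "B = binomial_pmf m (1/2)"
  define W where "W = {s. 1 \<le> s \<and> s \<le> m \<and> \<bar>2 * real s - (real m + 1)\<bar> \<le> 2 * t}"
  define T where "T = {k. t - 1/2 \<le> \<bar>real k - real m / 2\<bar>}"
  have tail: "measure_pmf.prob B A \<le> measure_pmf.prob B T" if "\<And>k. k \<le> m \<Longrightarrow> k \<in> A \<Longrightarrow> k \<in> T" for A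
  proof -
    have "measure_pmf.prob B A = measure_pmf.prob B (A \<inter> set_pmf B)"
      by (simp add: measure_Int_set_pmf)
    also have "\<dots> \<le> measure_pmf.prob B T"
      using that by (intro measure_pmf.finite_measure_mono) (auto simp: B_def)
    finally show ?thesis .
  qed
  have "a \<in> {0..1}" using assms(1,2) by auto
  have "hockey_stick (exp \<epsilon>) (blanket m (bernoulli_pmf a)) (blanket m (bernoulli_pmf b))
      \<le> measure_pmf.prob (blanket m (bernoulli_pmf a)) (- W)"
    using pmf_blanket_le_exp_pmf_blanket[OF assms(1-4,7,8)] by (intro hockey_stick_le_prob) (auto simp: W_def)
  also have "\<dots> = a * measure_pmf.prob B (Suc -` (- W)) + (1 - a) * measure_pmf.prob B (- W)"
    using \<open>a \<in> {0..1}\<close> by (simp add: blanket_bernoulli prob_bind_bernoulli_if B_def)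
  also have "\<dots> \<le> a * measure_pmf.prob B T + (1 - a) * measure_pmf.prob B T"
    using \<open>a \<in> {0..1}\<close> assms(7)
    by (intro add_mono mult_left_mono tail) (auto simp: W_def T_def abs_if split: if_splits)
  also have "\<dots> \<le> 2 * exp (- 2 * (t - 1/2)\<^sup>2 / real m)"
    using binomial_distribution.prob_abs_ge[of "1/2" m "t - 1/2"] assms(5,6)
    by (simp add: binomial_distribution_def B_def T_def algebra_simps)
  finally show ?thesis .
qed

section \<open>Averaging over the number of coins\<close>

lemma sum_binomial_pmf_half_power:
  assumes "p \<in> {0..1}"
  shows "(\<Sum>k\<le>N. pmf (binomial_pmf N p) k * (1/2) ^ k) = (1 - p/2) ^ N"
proof -
  have "(\<Sum>k\<le>N. pmf (binomial_pmf N p) k * (1/2) ^ k) = (\<Sum>k\<le>N. real (N choose k) * (p/2) ^ k * (1 - p) ^ (N - k))"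
    using assms by (simp add: power_mult_distrib power_divide algebra_simps)
  also have "\<dots> = (p/2 + (1 - p)) ^ N"
    by (subst binomial_ring) (simp add: atLeast0AtMost)
  finally show ?thesis by simp
qed

text \<open>A multiplicative Chernoff bound for the lower tail, via Markov's inequality for \<open>2\<^sup>-\<^sup>k\<close>.\<close>

lemma prob_binomial_pmf_le_quarter_mean:
  assumes "p \<in> {0..1}"
  shows "measure_pmf.prob (binomial_pmf N p) {k. real k \<le> real N * p / 4} \<le> exp (- (real N * p / 4))"
proof -
  define B where "B = binomial_pmf N p"
  define a where "a = real N * p / 4"
  have "0 \<le> a" using assms by (simp add: a_def)
  have "set_pmf B \<subseteq> {..N}"
    using assms by (auto simp: B_def set_pmf_binomial_eq)
  then have "measure_pmf.prob B {k. real k \<le> a} \<le> measure_pmf.prob B ({..N} \<inter> {k. real k \<le> a})"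
    by (subst measure_Int_set_pmf[symmetric]) (intro measure_pmf.finite_measure_mono, auto)
  also have "\<dots> = (\<Sum>k\<le>N. if real k \<le> a then pmf B k else 0)"
    by (simp add: measure_measure_pmf_finite sum.inter_restrict)
  also have "\<dots> \<le> (\<Sum>k\<le>N. pmf B k * (2 powr a * (1/2) ^ k))"
  proof (intro sum_mono)
    fix k
    have "1 \<le> 2 powr a * (1/2) ^ k" if "real k \<le> a"
      using that by (simp add: powr_realpow[symmetric] field_simps)
    then show "(if real k \<le> a then pmf B k else 0) \<le> pmf B k * (2 powr a * (1/2) ^ k)"
      using mult_left_mono[of 1 _ "pmf B k"] by auto
  qed
  also have "\<dots> = 2 powr a * (1 - p/2) ^ N"
    unfolding sum_binomial_pmf_half_power[OF assms, of N, symmetric] B_def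
    by (simp add: sum_distrib_left mult.left_commute)
  also have "\<dots> \<le> exp a * exp (- p/2) ^ N"
  proof (intro mult_mono power_mono)
    show "2 powr a \<le> exp a"
      using \<open>0 \<le> a\<close> ln_2_less_1 by (simp add: powr_def mult_left_le)
    show "1 - p/2 \<le> exp (- p/2)"
      using exp_ge_add_one_self[of "- p/2"] by simp
  qed (use assms in auto)
  also have "\<dots> = exp (- a)"
    by (simp add: a_def exp_of_nat_mult[symmetric] exp_add[symmetric])
  finally show ?thesis by (simp add: B_def a_def)
qed

lemma blanket_window_bounds:
  fixes u L :: real
  assumes "0 \<le> u" "1/4 \<le> L" and k: "2048 * L * (u\<^sup>2 + 1) \<le> real k"
  shows "4 * (1/2 + sqrt (8 * real k * L)) \<le> real k + 1"
    and "8 * u * (1/2 + sqrt (8 * real k * L)) \<le> real k + 1"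
proof -
  have "2048 * L * 1 \<le> 2048 * L * (u\<^sup>2 + 1)" "2048 * L * u\<^sup>2 \<le> 2048 * L * (u\<^sup>2 + 1)"
    using assms(2) by (intro mult_left_mono; simp)+
  then have k_ge: "2048 * L \<le> real k" "2048 * L * u\<^sup>2 \<le> real k" using k by linarith+
  have "2 * u \<le> u\<^sup>2 + 1" using sum_squares_bound[of u 1] by (simp add: power2_eq_square)
  then have "8 * u \<le> 512 * (u\<^sup>2 + 1)"
    using mult_left_mono[of "2 * u" "u\<^sup>2 + 1" 512] assms(1) by linarith
  also have "\<dots> \<le> 2048 * L * (u\<^sup>2 + 1)"
    using assms(2) by (intro mult_right_mono) auto
  finally have "8 * u \<le> real k" using k by linarith
  have root: "c * sqrt (8 * real k * L) \<le> real k / 16" if "0 \<le> c" "2048 * L * c\<^sup>2 \<le> real k" for c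
  proof -
    have "c\<^sup>2 * (8 * real k * L) = (2048 * L * c\<^sup>2) * real k / 256" by simp
    also have "\<dots> \<le> (real k / 16)\<^sup>2"
      using mult_right_mono[OF that(2), of "real k"] by (simp add: ac_simps power2_eq_square)
    finally have "sqrt (c\<^sup>2 * (8 * real k * L)) \<le> sqrt ((real k / 16)\<^sup>2)"
      by (rule real_sqrt_le_mono)
    then show ?thesis
      using that(1) k_ge(1) assms(2) by (simp add: real_sqrt_mult)
  qed
  show "4 * (1/2 + sqrt (8 * real k * L)) \<le> real k + 1"
    using root[of 1] k_ge(1) assms(2) by simp
  show "8 * u * (1/2 + sqrt (8 * real k * L)) \<le> real k + 1"
    using root[OF assms(1) k_ge(2)] \<open>8 * u \<le> real k\<close> by (simp add: algebra_simps)
qed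

lemma hockey_stick_blanket_le_exp:
  fixes q a b \<epsilon> L :: real
  assumes "0 \<le> q" "a \<in> {q..1 - q}" "b \<in> {q..1 - q}" "0 < \<epsilon>" "1/4 \<le> L"
    and k: "2048 * L * (((1 - 2 * q) / \<epsilon>)\<^sup>2 + 1) \<le> real k"
  shows "hockey_stick (exp \<epsilon>) (blanket k (bernoulli_pmf a)) (blanket k (bernoulli_pmf b)) \<le> exp (- L) / 2"
proof -
  define t where "t = 1/2 + sqrt (8 * real k * L)"
  have "0 \<le> (1 - 2 * q) / \<epsilon>" using assms(2,4) by simp
  note window = blanket_window_bounds[OF this assms(5) k, folded t_def]
  have "2048 * L * 1 \<le> 2048 * L * (((1 - 2 * q) / \<epsilon>)\<^sup>2 + 1)"
    using assms(5) by (intro mult_left_mono) auto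
  then have "0 < real k" using k assms(5) by linarith
  then have "0 < k" by simp
  have "8 * (1 - 2 * q) * t = \<epsilon> * (8 * ((1 - 2 * q) / \<epsilon>) * t)"
    using assms(4) by simp
  also have "\<dots> \<le> \<epsilon> * (real k + 1)"
    using window(2) assms(4) by (intro mult_left_mono) auto
  finally have "hockey_stick (exp \<epsilon>) (blanket k (bernoulli_pmf a)) (blanket k (bernoulli_pmf b))
      \<le> 2 * exp (- 2 * (t - 1/2)\<^sup>2 / real k)"
    using assms(1-5) window(1) \<open>0 < k\<close> by (intro hockey_stick_blanket_le_hoeffding) (auto simp: t_def)
  also have "\<dots> = 2 * exp (- 16 * L)"
    using assms(5) \<open>0 < k\<close> by (simp add: t_def)
  also have "\<dots> \<le> exp (- L) / 2"
  proof -
    have "4 \<le> exp (15 * L)" using exp_ge_add_one_self[of "15 * L"] assms(5) by linarith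
    then have "4 * exp (- 16 * L) \<le> exp (15 * L) * exp (- 16 * L)" by (intro mult_right_mono) auto
    then show ?thesis by (simp add: exp_add[symmetric])
  qed
  finally show ?thesis .
qed

lemma sum_binomial_pmf_le_lower_tail:
  assumes "p \<in> {0..1}" "\<And>k. f k \<le> 1" "\<And>k. real N * p / 4 < real k \<Longrightarrow> f k \<le> c" "0 \<le> c"
  shows "(\<Sum>k\<le>N. pmf (binomial_pmf N p) k * f k) \<le> exp (- (real N * p / 4)) + c"
proof -
  define B where "B = binomial_pmf N p"
  define A where "A = {k. real k \<le> real N * p / 4}"
  have "(\<Sum>k\<le>N. pmf B k * f k) \<le> (\<Sum>k\<le>N. pmf B k * (of_bool (k \<in> A) + c))"
    using assms(2-4) by (intro sum_mono mult_left_mono) (auto simp: A_def add_increasing2 not_le)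
  also have "\<dots> = (\<Sum>k\<le>N. pmf B k * of_bool (k \<in> A)) + c * (\<Sum>k\<le>N. pmf B k)"
    by (simp add: distrib_left sum.distrib sum_distrib_left mult.commute)
  also have "(\<Sum>k\<le>N. pmf B k) = 1"
    using assms(1) by (intro sum_pmf_eq_1) (auto simp: B_def set_pmf_binomial_eq)
  also have "(\<Sum>k\<le>N. pmf B k * of_bool (k \<in> A)) = measure_pmf.prob B ({..N} \<inter> A)"
    by (auto simp: measure_measure_pmf_finite sum.inter_restrict intro!: sum.cong)
  also have "\<dots> \<le> measure_pmf.prob B A"
    by (intro measure_pmf.finite_measure_mono) auto
  also have "\<dots> \<le> exp (- (real N * p / 4))"
    unfolding B_def A_def by (rule prob_binomial_pmf_le_quarter_mean[OF assms(1)])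
  finally show ?thesis by (simp add: B_def)
qed

text \<open>The blanket is wide enough unless the number of coins falls below a quarter of its mean.\<close>

lemma expected_hockey_stick_blanket_le_exp:
  fixes p q a b \<epsilon> L :: real
  assumes "p \<in> {0..1}" "0 \<le> q" "a \<in> {q..1 - q}" "b \<in> {q..1 - q}" "0 < \<epsilon>" "1/4 \<le> L"
    and N: "8192 * L * (((1 - 2 * q) / \<epsilon>)\<^sup>2 + 1) \<le> real N * p"
  shows "(\<Sum>k\<le>N. pmf (binomial_pmf N p) k *
            hockey_stick (exp \<epsilon>) (blanket k (bernoulli_pmf a)) (blanket k (bernoulli_pmf b))) \<le> exp (- L)"
proof -
  have "(\<Sum>k\<le>N. pmf (binomial_pmf N p) k *
            hockey_stick (exp \<epsilon>) (blanket k (bernoulli_pmf a)) (blanket k (bernoulli_pmf b)))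
      \<le> exp (- (real N * p / 4)) + exp (- L) / 2"
    using N by (intro sum_binomial_pmf_le_lower_tail[OF assms(1)] hockey_stick_le_1
        hockey_stick_blanket_le_exp[OF assms(2-6)]) auto
  also have "exp (- (real N * p / 4)) \<le> exp (- 5 * L)"
  proof -
    have "8192 * L * 1 \<le> 8192 * L * (((1 - 2 * q) / \<epsilon>)\<^sup>2 + 1)"
      using assms(6) by (intro mult_left_mono) auto
    then have "5 * L \<le> real N * p / 4" using N assms(6) by linarith
    then show ?thesis by simp
  qed
  also have "exp (- 5 * L) \<le> exp (- L) / 2"
  proof -
    have "2 \<le> exp (4 * L)" using exp_ge_add_one_self[of "4 * L"] assms(6) by linarith
    then have "2 * exp (- 5 * L) \<le> exp (4 * L) * exp (- 5 * L)" by (intro mult_right_mono) auto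
    then show ?thesis by (simp add: exp_add[symmetric])
  qed
  finally show ?thesis by simp
qed

text \<open>Suffices when \<open>\<delta> > e\<^sup>-\<^sup>1\<^sup>/\<^sup>4\<close>.\<close>

lemma expected_hockey_stick_blanket_le_tv:
  fixes p q a b \<epsilon> :: real
  assumes "p \<in> {0..1}" "0 \<le> q" "a \<in> {q..1 - q}" "b \<in> {q..1 - q}" "0 \<le> \<epsilon>"
  shows "(\<Sum>k\<le>N. pmf (binomial_pmf N p) k *
            hockey_stick (exp \<epsilon>) (blanket k (bernoulli_pmf a)) (blanket k (bernoulli_pmf b)))
    \<le> (1 - 2 * q) * (1 + (1 - p) ^ N) / 2"
proof -
  define B where "B = binomial_pmf N p"
  have "\<bar>a - b\<bar> \<le> 1 - 2 * q" using assms(3,4) by auto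
  define c where "c = (1 - 2 * q) / 2"
  have "hockey_stick (exp \<epsilon>) (blanket k (bernoulli_pmf a)) (blanket k (bernoulli_pmf b))
      \<le> c + (if k = 0 then c else 0)" for k
    using hockey_stick_blanket_le_tv[of "exp \<epsilon>" a b k] \<open>\<bar>a - b\<bar> \<le> 1 - 2 * q\<close> assms(2-5)
    by (auto simp: c_def intro: order_trans mult_right_mono)
  then have "(\<Sum>k\<le>N. pmf B k *
        hockey_stick (exp \<epsilon>) (blanket k (bernoulli_pmf a)) (blanket k (bernoulli_pmf b)))
      \<le> (\<Sum>k\<le>N. pmf B k * (c + (if k = 0 then c else 0)))"
    by (intro sum_mono mult_left_mono) auto
  also have "\<dots> = c * (\<Sum>k\<le>N. pmf B k) + c * pmf B 0"
  proof -
    have "pmf B k * (c + (if k = 0 then c else 0)) = c * pmf B k + (if k = 0 then c * pmf B 0 else 0)" for k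
      by simp
    then show ?thesis by (simp add: sum.distrib sum_distrib_left)
  qed
  also have "(\<Sum>k\<le>N. pmf B k) = 1"
    using assms(1) by (intro sum_pmf_eq_1) (auto simp: B_def set_pmf_binomial_eq)
  also have "pmf B 0 = (1 - p) ^ N"
    using assms(1) by (simp add: B_def)
  also have "c * 1 + c * (1 - p) ^ N = (1 - 2 * q) * (1 + (1 - p) ^ N) / 2"
    by (simp add: c_def field_simps)
  finally show ?thesis by (simp add: B_def)
qed

section \<open>Privacy of the bit-sum protocol\<close>

lemma neighboringE:
  assumes "neighboring X X'" "X \<noteq> []"
  obtains j where "j < length X" "X = take j X @ X ! j # drop (Suc j) X"
    "X' = take j X @ X' ! j # drop (Suc j) X"
proof -
  have len: "length X' = length X" using assms by (simp add: neighboring_def)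
  define D where "D = {i. i < length X \<and> X ! i \<noteq> X' ! i}"
  have "card D \<le> 1" "finite D" using assms(1) by (auto simp: neighboring_def D_def)
  obtain j where j: "j < length X" and "D \<subseteq> {j}"
  proof (cases "D = {}")
    case True
    then show ?thesis using that[of 0] assms(2) by auto
  next
    case False
    then obtain j where "j \<in> D" by blast
    then have "D \<subseteq> {j}"
      using \<open>card D \<le> 1\<close> card_le_Suc0_iff_eq[OF \<open>finite D\<close>] by auto
    then show ?thesis using that[of j] \<open>j \<in> D\<close> by (auto simp: D_def)
  qed
  then have same: "X ! i = X' ! i" if "i < length X" "i \<noteq> j" for i
    using that by (auto simp: D_def)
  have "take j X' = take j X" "drop (Suc j) X' = drop (Suc j) X"
    using same j len by (auto intro!: nth_equalityI)
  then show ?thesis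
    using that[OF j] id_take_nth_drop[OF j] id_take_nth_drop[of j X'] j len by simp
qed

lemma bitsum_shuffled_dp_if_expected_hockey_stick_le:
  assumes "1 \<le> n" "p = lam / real n" "p \<in> {0..1}" "0 \<le> \<epsilon>"
    and bound: "\<And>x x'. (\<Sum>k\<le>n - 1. pmf (binomial_pmf (n - 1) p) k *
      hockey_stick (exp \<epsilon>) (blanket k (bitsum_encoder n lam x)) (blanket k (bitsum_encoder n lam x'))) \<le> \<delta>"
  shows "bitsum_shuffled_dp n lam \<epsilon> \<delta>"
  unfolding bitsum_shuffled_dp_def diff_private_def
proof (intro allI impI)
  fix X X' :: "bool list" and T
  assume "length X = n" and nb: "neighboring X X'"
  define R where "R = bitsum_encoder n lam"
  have "X \<noteq> []" using \<open>length X = n\<close> assms(1) by auto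
  then obtain j where j: "j < length X" "X = take j X @ X ! j # drop (Suc j) X"
      "X' = take j X @ X' ! j # drop (Suc j) X"
    using neighboringE[OF nb] by blast
  have "length X' = length X" using nb by (simp add: neighboring_def)
  have "length (take j X) + length (drop (Suc j) X) = n - 1" using j(1) \<open>length X = n\<close> by simp
  then have "hockey_stick (exp \<epsilon>) (ones_pmf R X) (ones_pmf R X') \<le> \<delta>"
    using hockey_stick_ones_pmf_bitsum_le[OF assms(2,3), of "exp \<epsilon>" "take j X" "X ! j" "drop (Suc j) X" "X' ! j"]
      bound[of "X ! j" "X' ! j"] j(2,3) by (simp add: R_def)
  then show "measure_pmf.prob (shuffled_view R X) T \<le> exp \<epsilon> * measure_pmf.prob (shuffled_view R X') T + \<delta>"
    using prob_shuffled_view_le[OF _ \<open>length X' = length X\<close>, of "exp \<epsilon>" R T] by simp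
qed

lemma tv_bound_le_exp:
  fixes L p :: real
  assumes "0 \<le> L" "L < 1/4" "p \<in> {0..1}" "1 \<le> n" "4 * L \<le> real n * p"
  shows "(1 - p) * (1 + (1 - p) ^ (n - 1)) / 2 \<le> exp (- L)"
proof -
  define y where "y = exp (- L)"
  have "y \<le> 1" "3/4 \<le> y" using assms(1,2) exp_ge_add_one_self[of "- L"] by (auto simp: y_def)
  have "(1 - p) * (1 + (1 - p) ^ (n - 1)) = (1 - p) + (1 - p) ^ n"
    using assms(4) by (cases n) (simp_all add: distrib_left)
  then have "(1 - p) * (1 + (1 - p) ^ (n - 1)) / 2 \<le> (1 + exp (- p) ^ n) / 2"
    using assms(3) exp_ge_add_one_self[of "- p"] power_mono[of "1 - p" "exp (- p)" n] by simp
  also have "exp (- p) ^ n \<le> y ^ 4"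
    using assms(5) by (simp add: y_def exp_of_nat_mult[symmetric])
  also have "(1 + y ^ 4) / 2 \<le> y"
  proof -
    have "(3/4::real)^3 \<le> y^3" "(3/4::real)^2 \<le> y^2" using \<open>3/4 \<le> y\<close> by (intro power_mono; simp)+
    then have "0 \<le> y^3 + y^2 + y - 1" using \<open>3/4 \<le> y\<close> by (simp add: power2_eq_square power3_eq_cube)
    then have "0 \<le> (1 - y) * (y^3 + y^2 + y - 1)" using \<open>y \<le> 1\<close> by simp
    then show ?thesis by (simp add: algebra_simps power2_eq_square power3_eq_cube power4_eq_xxxx)
  qed
  finally show ?thesis by (simp add: y_def)
qed

lemma bitsum_shuffled_dp_sufficient:
  fixes n :: nat and \<delta> \<epsilon> lam :: real
  defines "L \<equiv> ln (1 / \<delta>)" and "p \<equiv> lam / real n"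
  assumes n: "1 \<le> n" and \<delta>: "0 < \<delta>" "\<delta> < 1" and \<epsilon>: "0 < \<epsilon>"
    and lam: "0 < lam" "lam < real n" "4 * L \<le> lam"
    and concentrated: "1/4 \<le> L \<Longrightarrow> 8192 * L * (((1 - p) / \<epsilon>)\<^sup>2 + 1) \<le> real (n - 1) * p"
  shows "bitsum_shuffled_dp n lam \<epsilon> \<delta>"
proof (rule bitsum_shuffled_dp_if_expected_hockey_stick_le)
  show "p \<in> {0..1}" using lam by (simp add: p_def)
  have "0 \<le> L" using \<delta> by (simp add: L_def)
  have "\<delta> = exp (- L)" using \<delta> by (simp add: L_def ln_div)
  have p: "p = lam / real n" by (simp add: p_def)
  fix x x'
  define q where "q = p / 2"
  let ?a = "\<lambda>x. if x then 1 - q else q"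
  have R: "bitsum_encoder n lam x = bernoulli_pmf (?a x)" for x
    using bitsum_encoder_eq_bernoulli[OF p \<open>p \<in> {0..1}\<close>] by (simp add: q_def)
  have a: "0 \<le> q" "?a x \<in> {q..1 - q}" "?a x' \<in> {q..1 - q}" "1 - 2 * q = 1 - p"
    using \<open>p \<in> {0..1}\<close> by (auto simp: q_def)
  show "(\<Sum>k\<le>n - 1. pmf (binomial_pmf (n - 1) p) k *
      hockey_stick (exp \<epsilon>) (blanket k (bitsum_encoder n lam x)) (blanket k (bitsum_encoder n lam x'))) \<le> \<delta>"
  proof (cases "1/4 \<le> L")
    case True
    then show ?thesis
      unfolding R \<open>\<delta> = exp (- L)\<close> using concentrated a
      by (intro expected_hockey_stick_blanket_le_exp[OF \<open>p \<in> {0..1}\<close> a(1-3) \<epsilon> True]) simp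
  next
    case False
    have "real n * p = lam" using n by (simp add: p_def)
    then have "(1 - p) * (1 + (1 - p) ^ (n - 1)) / 2 \<le> \<delta>"
      using tv_bound_le_exp[OF \<open>0 \<le> L\<close> _ \<open>p \<in> {0..1}\<close> n] False lam(3) \<open>\<delta> = exp (- L)\<close> by simp
    then show ?thesis
      unfolding R using expected_hockey_stick_blanket_le_tv[OF \<open>p \<in> {0..1}\<close> a(1-3), of \<epsilon> "n - 1"] a(4)
        \<epsilon> by simp
  qed
qed (use n \<epsilon> in \<open>auto simp: p_def\<close>)

section \<open>Choice of \<open>\<lambda>\<close>\<close>

lemma sqrt_divide_le_iff:
  fixes A \<epsilon> x :: real
  assumes "0 < x" "0 \<le> \<epsilon>"
  shows "sqrt (A / x) \<le> \<epsilon> \<longleftrightarrow> A \<le> \<epsilon>\<^sup>2 * x"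
proof -
  have "sqrt (A / x) \<le> \<epsilon> \<longleftrightarrow> sqrt (A / x) \<le> sqrt (\<epsilon>\<^sup>2)"
    using assms(2) by simp
  also have "\<dots> \<longleftrightarrow> A \<le> \<epsilon>\<^sup>2 * x"
    using assms(1) by (subst real_sqrt_le_iff) (simp add: pos_divide_le_eq)
  finally show ?thesis .
qed

lemma bitsum_shuffled_dp_large_eps:
  fixes n :: nat and \<delta> \<epsilon> :: real
  defines "L \<equiv> ln (1 / \<delta>)"
  assumes n: "1 \<le> n" and \<delta>: "0 < \<delta>" "\<delta> < 1" and \<epsilon>: "0 < \<epsilon>" "\<epsilon> \<le> 1"
    and large: "65536 * L \<le> \<epsilon>\<^sup>2 * real n"
  shows "0 < 32768 * L / \<epsilon>\<^sup>2" "32768 * L / \<epsilon>\<^sup>2 < real n" "bitsum_shuffled_dp n (32768 * L / \<epsilon>\<^sup>2) \<epsilon> \<delta>"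
proof -
  define lam where "lam = 32768 * L / \<epsilon>\<^sup>2"
  have "0 < L" using \<delta> by (simp add: L_def)
  have "0 < \<epsilon>\<^sup>2" "\<epsilon>\<^sup>2 \<le> 1" using \<epsilon> by (simp_all add: power_le_one)
  have "0 < lam" using \<open>0 < L\<close> \<open>0 < \<epsilon>\<^sup>2\<close> by (simp add: lam_def)
  have "lam \<le> real n / 2"
    using large \<open>0 < \<epsilon>\<^sup>2\<close> by (simp add: lam_def field_simps)
  have "L \<le> L / \<epsilon>\<^sup>2"
    using \<open>0 < L\<close> \<open>0 < \<epsilon>\<^sup>2\<close> \<open>\<epsilon>\<^sup>2 \<le> 1\<close> by (simp add: field_simps mult_left_le)
  moreover have "lam = 32768 * (L / \<epsilon>\<^sup>2)" by (simp add: lam_def)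
  ultimately have "4 * L \<le> lam" using \<open>0 < L\<close> by linarith
  moreover have "8192 * L * (((1 - lam / real n) / \<epsilon>)\<^sup>2 + 1) \<le> real (n - 1) * (lam / real n)"
    if "1/4 \<le> L"
  proof -
    have "16384 \<le> real n"
      using large that \<open>\<epsilon>\<^sup>2 \<le> 1\<close> mult_right_mono[OF \<open>\<epsilon>\<^sup>2 \<le> 1\<close>, of "real n"] by linarith
    then have "real n / 2 \<le> real (n - 1)" by simp
    have "0 \<le> lam / real n" "lam / real n \<le> 1"
      using \<open>0 < lam\<close> \<open>lam \<le> real n / 2\<close> n by auto
    then have "((1 - lam / real n) / \<epsilon>)\<^sup>2 \<le> 1 / \<epsilon>\<^sup>2"
      by (simp add: power_divide divide_right_mono power_le_one)
    moreover have "1 \<le> 1 / \<epsilon>\<^sup>2" using \<open>0 < \<epsilon>\<^sup>2\<close> \<open>\<epsilon>\<^sup>2 \<le> 1\<close> by simp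
    ultimately have "8192 * L * (((1 - lam / real n) / \<epsilon>)\<^sup>2 + 1) \<le> 8192 * L * (2 / \<epsilon>\<^sup>2)"
      using \<open>0 < L\<close> by (intro mult_left_mono) auto
    also have "\<dots> = lam / 2" by (simp add: lam_def)
    also have "\<dots> = real n / 2 * (lam / real n)" using n by simp
    also have "\<dots> \<le> real (n - 1) * (lam / real n)"
      using \<open>real n / 2 \<le> real (n - 1)\<close> \<open>0 < lam\<close> by (intro mult_right_mono) auto
    finally show ?thesis .
  qed
  moreover have "lam < real n"
    using \<open>0 < lam\<close> \<open>lam \<le> real n / 2\<close> by linarith
  ultimately show "bitsum_shuffled_dp n (32768 * L / \<epsilon>\<^sup>2) \<epsilon> \<delta>"
    using bitsum_shuffled_dp_sufficient[OF n \<delta> \<epsilon>(1) \<open>0 < lam\<close>]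
    unfolding lam_def[symmetric] unfolding L_def by blast
  show "0 < 32768 * L / \<epsilon>\<^sup>2" "32768 * L / \<epsilon>\<^sup>2 < real n"
    using \<open>0 < lam\<close> \<open>lam < real n\<close> by (simp_all add: lam_def)
qed

lemma bitsum_shuffled_dp_small_eps:
  fixes n :: nat and \<delta> \<epsilon> :: real
  defines "L \<equiv> ln (1 / \<delta>)"
  defines "lam \<equiv> real n - 1/512 * \<epsilon> * real n powr (3/2) / sqrt L"
  assumes n: "1 \<le> n" and \<delta>: "0 < \<delta>" "\<delta> < 1" and \<epsilon>: "0 < \<epsilon>" "\<epsilon> \<le> 1"
    and "65536 * L \<le> \<epsilon> * real n" and small: "\<epsilon>\<^sup>2 * real n < 65536 * L"
  shows "0 < lam" "lam < real n" "bitsum_shuffled_dp n lam \<epsilon> \<delta>"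
proof -
  define c where "c = \<epsilon> * sqrt (real n) / (512 * sqrt L)"
  have "0 < L" using \<delta> by (simp add: L_def)
  have "0 < c" using \<epsilon> n \<open>0 < L\<close> by (simp add: c_def)
  have "real n powr (3/2) = real n powr (1 + 1/2)" by simp
  also have "\<dots> = real n * sqrt (real n)"
    by (subst powr_add) (simp add: powr_half_sqrt)
  finally have lam_eq: "lam = real n * (1 - c)"
    using \<open>0 < L\<close> by (simp add: lam_def c_def field_simps)
  have c2: "c\<^sup>2 = \<epsilon>\<^sup>2 * real n / (262144 * L)"
    using \<open>0 < L\<close> by (simp add: c_def power_divide power_mult_distrib)
  then have "c\<^sup>2 * (262144 * L) < (1/2)\<^sup>2 * (262144 * L)"
    using small \<open>0 < L\<close> by (simp add: power2_eq_square)
  then have "c\<^sup>2 < (1/2)\<^sup>2"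
    using \<open>0 < L\<close> mult_less_cancel_right_pos[of "262144 * L" "c\<^sup>2" "(1/2)\<^sup>2"] by simp
  then have "c < 1/2" by (rule power_less_imp_less_base) simp
  have "65536 * L \<le> real n"
    using \<open>65536 * L \<le> \<epsilon> * real n\<close> \<epsilon> mult_right_mono[OF \<epsilon>(2), of "real n"] by linarith
  have "c * real n \<le> 1/2 * real n"
    using \<open>c < 1/2\<close> by (intro mult_right_mono) auto
  then have "real n / 2 \<le> lam"
    by (simp add: lam_eq algebra_simps)
  then show "0 < lam" using n by linarith
  show "lam < real n" using \<open>0 < c\<close> n by (simp add: lam_eq)
  have "4 * L \<le> lam" using \<open>real n / 2 \<le> lam\<close> \<open>65536 * L \<le> real n\<close> \<open>0 < L\<close> by linarith
  moreover have "8192 * L * (((1 - lam / real n) / \<epsilon>)\<^sup>2 + 1) \<le> real (n - 1) * (lam / real n)"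
    if "1/4 \<le> L"
  proof -
    have "lam / real n = 1 - c" using n by (simp add: lam_eq)
    have "8192 * L * (((1 - lam / real n) / \<epsilon>)\<^sup>2 + 1) = real n / 32 + 8192 * L"
      using \<open>0 < L\<close> \<epsilon> by (simp add: \<open>lam / real n = 1 - c\<close> power_divide c2 field_simps)
    also have "\<dots> \<le> real n / 2 * (1/2)"
      using \<open>65536 * L \<le> real n\<close> by simp
    also have "\<dots> \<le> real (n - 1) * (lam / real n)"
      using \<open>65536 * L \<le> real n\<close> that \<open>c < 1/2\<close> \<open>lam / real n = 1 - c\<close>
      by (intro mult_mono) auto
    finally show ?thesis .
  qed
  ultimately show "bitsum_shuffled_dp n lam \<epsilon> \<delta>"
    using bitsum_shuffled_dp_sufficient[OF n \<delta> \<epsilon>(1) \<open>0 < lam\<close> \<open>lam < real n\<close>]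
    unfolding L_def by blast
qed

theorem theorem4p1:
  "\<exists>(\<kappa>1::real) (\<kappa>2::real) (\<kappa>3::real) (\<kappa>4::real) (\<kappa>5::real). \<kappa>1 > 0 \<and> \<kappa>2 > 0 \<and> \<kappa>3 > 0 \<and> \<kappa>4 > 0 \<and> \<kappa>5 > 0 \<and>
     (\<forall>(n::nat) (\<delta>::real) (\<epsilon>::real).
        n \<ge> 1 \<longrightarrow> 0 < \<delta> \<longrightarrow> \<delta> < 1 \<longrightarrow>
        \<kappa>2 * ln (1 / \<delta>) / real n \<le> \<epsilon> \<longrightarrow> \<epsilon> \<le> 1 \<longrightarrow>
        (\<exists>lam::real. 0 < lam \<and> lam < real n \<and>
           bitsum_shuffled_dp n lam \<epsilon> \<delta> \<and>
           (if \<epsilon> \<ge> sqrt (\<kappa>3 * ln (1 / \<delta>) / real n)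
            then lam \<le> \<kappa>4 * ln (1 / \<delta>) / \<epsilon>\<^sup>2
            else lam \<le> real n - \<kappa>5 * \<epsilon> * real n powr (3/2) / sqrt (ln (1 / \<delta>)))))"
  \<comment> \<open>\<open>\<kappa>1\<close> does not occur in the statement.\<close>
proof (rule exI[of _ 1], rule exI[of _ 65536], rule exI[of _ 65536], rule exI[of _ 32768],
    rule exI[of _ "1/512"], intro conjI allI impI)
  fix n :: nat and \<delta> \<epsilon> :: real
  assume n: "1 \<le> n" and \<delta>: "0 < \<delta>" "\<delta> < 1" and \<epsilon>: "65536 * ln (1 / \<delta>) / real n \<le> \<epsilon>" "\<epsilon> \<le> 1"
  have "0 < ln (1 / \<delta>)" using \<delta> by simp
  then have "0 < \<epsilon>" "65536 * ln (1 / \<delta>) \<le> \<epsilon> * real n"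
    using \<epsilon>(1) n by (auto simp: field_simps intro: less_le_trans[OF _ \<epsilon>(1)])
  then have large_iff: "sqrt (65536 * ln (1 / \<delta>) / real n) \<le> \<epsilon> \<longleftrightarrow> 65536 * ln (1 / \<delta>) \<le> \<epsilon>\<^sup>2 * real n"
    using n by (simp add: sqrt_divide_le_iff)
  show "\<exists>lam. 0 < lam \<and> lam < real n \<and> bitsum_shuffled_dp n lam \<epsilon> \<delta> \<and>
      (if sqrt (65536 * ln (1 / \<delta>) / real n) \<le> \<epsilon> then lam \<le> 32768 * ln (1 / \<delta>) / \<epsilon>\<^sup>2
       else lam \<le> real n - 1/512 * \<epsilon> * real n powr (3/2) / sqrt (ln (1 / \<delta>)))"
  proof (cases "65536 * ln (1 / \<delta>) \<le> \<epsilon>\<^sup>2 * real n")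
    case True
    with bitsum_shuffled_dp_large_eps[OF n \<delta> \<open>0 < \<epsilon>\<close> \<epsilon>(2)] show ?thesis
      by (intro exI[of _ "32768 * ln (1 / \<delta>) / \<epsilon>\<^sup>2"]) (simp add: large_iff)
  next
    case False
    with bitsum_shuffled_dp_small_eps[OF n \<delta> \<open>0 < \<epsilon>\<close> \<epsilon>(2) \<open>65536 * ln (1 / \<delta>) \<le> \<epsilon> * real n\<close>]
    show ?thesis
      by (intro exI[of _ "real n - 1/512 * \<epsilon> * real n powr (3/2) / sqrt (ln (1 / \<delta>))"]) (simp add: large_iff)
  qed
qed simp_all

end
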